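(* Let $(\omega,c)\in\mathbb{R}^2$ satisfy: $\omega>c^2/4$, or $\omega=c^2/4$ and $c>0$. Then, as $\eta_3\to\alpha_1$ with $\eta_3\in(\alpha_0,\alpha_1)$, $$k\to\begin{cases}1&\text{if }\omega>c^2/4,\\ \frac1{\sqrt2}&\text{if }\omega=c^2/4\text{ and }c>0,\end{cases}\qquad \beta^2\to\begin{cases}\dfrac{2\sqrt\omega+c}{2\sqrt\omega-c}&\text{if }\omega>c^2/4,\\ \infty&\text{if }\omega=c^2/4\text{ and }c>0.\end{cases}$$
   Context: $\alpha_0=\tfrac13(4c+\sqrt{48\omega+4c^2})$, $\alpha_1=4\sqrt\omega+2c$, $A(x)=-3x^2+8cx+64\omega$. For $\eta_3\in(\alpha_0,\alpha_1)$: $\eta_1=\frac{-\eta_3+4c-\sqrt{A(\eta_3)}}{2}<0$, $\eta_2=\frac{-\eta_3+4c+\sqrt{A(\eta_3)}}{2}\in(0,\eta_3)$, $k\in(0,1)$ with $k^2=\frac{-\eta_1(\eta_3-\eta_2)}{\eta_3(\eta_2-\eta_1)}$, and $\beta^2=-\eta_3k^2/\eta_1$. *)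

theory Defs
  imports "HOL-Analysis.Analysis"
begin

definition alpha0 :: "real \<Rightarrow> real \<Rightarrow> real" where
  "alpha0 \<omega> c = (4*c + sqrt (48*\<omega> + 4*c^2)) / 3"

definition alpha1 :: "real \<Rightarrow> real \<Rightarrow> real" where
  "alpha1 \<omega> c = 4 * sqrt \<omega> + 2*c"

definition Apoly :: "real \<Rightarrow> real \<Rightarrow> real \<Rightarrow> real" where
  "Apoly \<omega> c x = -3*x^2 + 8*c*x + 64*\<omega>"

definition eta1 :: "real \<Rightarrow> real \<Rightarrow> real \<Rightarrow> real" where
  "eta1 \<omega> c \<eta>3 = (-\<eta>3 + 4*c - sqrt (Apoly \<omega> c \<eta>3)) / 2"

definition eta2 :: "real \<Rightarrow> real \<Rightarrow> real \<Rightarrow> real" where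
  "eta2 \<omega> c \<eta>3 = (-\<eta>3 + 4*c + sqrt (Apoly \<omega> c \<eta>3)) / 2"

definition ksq :: "real \<Rightarrow> real \<Rightarrow> real \<Rightarrow> real" where
  "ksq \<omega> c \<eta>3 = (- eta1 \<omega> c \<eta>3 * (\<eta>3 - eta2 \<omega> c \<eta>3))
                    / (\<eta>3 * (eta2 \<omega> c \<eta>3 - eta1 \<omega> c \<eta>3))"

definition kmod :: "real \<Rightarrow> real \<Rightarrow> real \<Rightarrow> real" where
  "kmod \<omega> c \<eta>3 = sqrt (ksq \<omega> c \<eta>3)"

definition betasq :: "real \<Rightarrow> real \<Rightarrow> real \<Rightarrow> real" where
  "betasq \<omega> c \<eta>3 = - \<eta>3 * ksq \<omega> c \<eta>3 / eta1 \<omega> c \<eta>3"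

end

theory Submission
  imports Defs
begin

text \<open>
  Since \<open>\<eta>\<^sub>2 - \<eta>\<^sub>1 = \<surd>A(\<eta>\<^sub>3)\<close> and \<open>A(\<alpha>\<^sub>1) = 4 (2\<surd>\<omega> - c)\<^sup>2\<close>, at \<open>\<eta>\<^sub>3 = \<alpha>\<^sub>1\<close> one has
  \<open>\<eta>\<^sub>1 = 2c - 4\<surd>\<omega>\<close> and \<open>\<eta>\<^sub>2 = 0\<close>. For \<open>\<omega> > c\<^sup>2/4\<close> the roots \<open>\<eta>\<^sub>1 < \<eta>\<^sub>2\<close> stay apart, so
  \<open>k\<^sup>2\<close> and \<open>\<beta>\<^sup>2\<close> are continuous at \<open>\<alpha>\<^sub>1\<close> and the limits are their values there.
  For \<open>\<omega> = c\<^sup>2/4\<close> the polynomial factors as \<open>A(x) = (3x + 4c)(4c - x)\<close> and all three of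
  \<open>\<eta>\<^sub>1, \<eta>\<^sub>2, \<surd>A\<close> vanish at \<open>\<alpha>\<^sub>1 = 4c\<close>. Writing \<open>k\<^sup>2\<close> in terms of the ratio
  \<open>(4c - x)/\<surd>A(x) = \<surd>((4c - x)/(3x + 4c))\<close>, which tends to \<open>0\<close>, gives \<open>k\<^sup>2 \<rightarrow> 1/2\<close>;
  and \<open>\<beta>\<^sup>2 = -\<eta>\<^sub>3 k\<^sup>2/\<eta>\<^sub>1\<close> blows up because \<open>\<eta>\<^sub>1 \<rightarrow> 0\<close> from below.
\<close>

lemma eta2_minus_eta1: "eta2 \<omega> c x - eta1 \<omega> c x = sqrt (Apoly \<omega> c x)"
  by (simp add: eta1_def eta2_def field_simps)

lemma ksq_eq: "ksq \<omega> c x = - eta1 \<omega> c x * (x - eta2 \<omega> c x) / (x * sqrt (Apoly \<omega> c x))"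
  by (simp add: ksq_def eta2_minus_eta1)

lemma isCont_eta1: "isCont (eta1 \<omega> c) x"
  unfolding eta1_def[abs_def] Apoly_def by (intro continuous_intros) simp

lemma isCont_eta2: "isCont (eta2 \<omega> c) x"
  unfolding eta2_def[abs_def] Apoly_def by (intro continuous_intros) simp

lemma isCont_Apoly: "isCont (Apoly \<omega> c) x"
  unfolding Apoly_def by (intro continuous_intros)

lemma isCont_ksq:
  assumes "x \<noteq> 0" and "Apoly \<omega> c x \<noteq> 0"
  shows "isCont (ksq \<omega> c) x"
proof -
  have "isCont (\<lambda>y. - eta1 \<omega> c y * (y - eta2 \<omega> c y) / (y * sqrt (Apoly \<omega> c y))) x"
    using assms isCont_eta1 isCont_eta2 isCont_Apoly
    by (intro continuous_intros) (auto intro: continuous_at_compose[unfolded o_def])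
  then show ?thesis
    by (simp add: ksq_eq[abs_def])
qed

lemma tendsto_kmod: "(ksq \<omega> c \<longlongrightarrow> l) F \<Longrightarrow> (kmod \<omega> c \<longlongrightarrow> sqrt l) F"
  unfolding kmod_def[abs_def] by (rule tendsto_real_sqrt)

lemma abs_less_two_sqrt_if_gt:
  assumes "c^2/4 < \<omega>"
  shows "\<bar>c\<bar> < 2 * sqrt \<omega>"
proof -
  have "\<bar>c\<bar> = sqrt (c^2)"
    by simp
  also have "\<dots> < sqrt (4 * \<omega>)"
    using assms by (intro real_sqrt_less_mono) simp
  also have "\<dots> = 2 * sqrt \<omega>"
    by (simp add: real_sqrt_mult)
  finally show ?thesis .
qed

lemma Apoly_alpha1:
  assumes "\<omega> \<ge> 0"
  shows "Apoly \<omega> c (alpha1 \<omega> c) = 4 * (2 * sqrt \<omega> - c)^2"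
proof -
  have "\<omega> = (sqrt \<omega>)^2"
    using assms by simp
  then show ?thesis
    unfolding Apoly_def alpha1_def by (simp add: power2_eq_square algebra_simps)
qed

lemma sqrt_Apoly_alpha1:
  assumes "\<omega> \<ge> 0" and "c \<le> 2 * sqrt \<omega>"
  shows "sqrt (Apoly \<omega> c (alpha1 \<omega> c)) = 2 * (2 * sqrt \<omega> - c)"
  using assms by (simp add: Apoly_alpha1 real_sqrt_mult)

lemma eta1_alpha1:
  assumes "\<omega> \<ge> 0" and "c \<le> 2 * sqrt \<omega>"
  shows "eta1 \<omega> c (alpha1 \<omega> c) = 2 * c - 4 * sqrt \<omega>"
  using sqrt_Apoly_alpha1[OF assms] by (simp add: eta1_def alpha1_def)

lemma eta2_alpha1:
  assumes "\<omega> \<ge> 0" and "c \<le> 2 * sqrt \<omega>"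
  shows "eta2 \<omega> c (alpha1 \<omega> c) = 0"
  using sqrt_Apoly_alpha1[OF assms] by (simp add: eta2_def alpha1_def)

lemma
  assumes "c^2/4 < \<omega>"
  shows ksq_alpha1: "ksq \<omega> c (alpha1 \<omega> c) = 1"
    and isCont_ksq_alpha1: "isCont (ksq \<omega> c) (alpha1 \<omega> c)"
proof -
  have \<omega>: "\<omega> \<ge> 0"
    using assms zero_le_power2[of c] by linarith
  have c: "\<bar>c\<bar> < 2 * sqrt \<omega>"
    using assms by (rule abs_less_two_sqrt_if_gt)
  then have c': "c \<le> 2 * sqrt \<omega>"
    by linarith
  have a: "alpha1 \<omega> c \<noteq> 0" and e1: "2 * c - 4 * sqrt \<omega> \<noteq> 0"
    using c by (auto simp: alpha1_def)
  show "ksq \<omega> c (alpha1 \<omega> c) = 1"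
    unfolding ksq_def eta1_alpha1[OF \<omega> c'] eta2_alpha1[OF \<omega> c'] using a e1 by simp
  have "Apoly \<omega> c (alpha1 \<omega> c) \<noteq> 0"
    using c by (simp add: Apoly_alpha1[OF \<omega>])
  with a show "isCont (ksq \<omega> c) (alpha1 \<omega> c)"
    by (rule isCont_ksq)
qed

lemma tendsto_ksq_alpha1:
  assumes "c^2/4 < \<omega>"
  shows "(ksq \<omega> c \<longlongrightarrow> 1) (at (alpha1 \<omega> c) within S)"
  using continuous_within[THEN iffD1,
      OF continuous_at_imp_continuous_at_within[OF isCont_ksq_alpha1[OF assms]]]
  unfolding ksq_alpha1[OF assms] .

lemma tendsto_betasq_alpha1:
  assumes "c^2/4 < \<omega>"
  shows "(betasq \<omega> c \<longlongrightarrow> (2 * sqrt \<omega> + c) / (2 * sqrt \<omega> - c)) (at (alpha1 \<omega> c) within S)"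
proof -
  have \<omega>: "\<omega> \<ge> 0"
    using assms zero_le_power2[of c] by linarith
  have c: "\<bar>c\<bar> < 2 * sqrt \<omega>"
    using assms by (rule abs_less_two_sqrt_if_gt)
  then have c': "c \<le> 2 * sqrt \<omega>" and e1: "2 * c - 4 * sqrt \<omega> \<noteq> 0"
    by linarith+
  have "(eta1 \<omega> c \<longlongrightarrow> 2 * c - 4 * sqrt \<omega>) (at (alpha1 \<omega> c) within S)"
    using continuous_within[THEN iffD1, OF continuous_at_imp_continuous_at_within,
        OF isCont_eta1[where \<omega>=\<omega> and c=c and x="alpha1 \<omega> c"]]
    unfolding eta1_alpha1[OF \<omega> c'] .
  then have "(betasq \<omega> c \<longlongrightarrow> - alpha1 \<omega> c * 1 / (2 * c - 4 * sqrt \<omega>))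
               (at (alpha1 \<omega> c) within S)"
    unfolding betasq_def[abs_def] using e1
    by (intro tendsto_intros tendsto_ksq_alpha1[OF assms] tendsto_ident_at) auto
  moreover have "- alpha1 \<omega> c * 1 / (2 * c - 4 * sqrt \<omega>) = (2 * sqrt \<omega> + c) / (2 * sqrt \<omega> - c)"
    using e1 by (simp add: alpha1_def field_simps)
  ultimately show ?thesis
    by simp
qed

lemma alpha1_degenerate:
  assumes "4 * \<omega> = c^2" and "c \<ge> 0"
  shows "alpha1 \<omega> c = 4 * c"
proof -
  have "\<omega> = (c/2)^2"
    using assms(1) by (simp add: power_divide)
  then show ?thesis
    using assms(2) by (simp add: alpha1_def)
qed

lemma Apoly_degenerate: "4 * \<omega> = c^2 \<Longrightarrow> Apoly \<omega> c x = (3 * x + 4 * c) * (4 * c - x)"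
  by (simp add: Apoly_def power2_eq_square algebra_simps)

lemma ksq_eq_ratio:
  assumes "x \<noteq> 0" and "Apoly \<omega> c x \<noteq> 0"
  shows "ksq \<omega> c x = (1 - (4 * c - x) / sqrt (Apoly \<omega> c x))
                       * (3 * x - 4 * c - sqrt (Apoly \<omega> c x)) / (4 * x)"
proof -
  have "sqrt (Apoly \<omega> c x) \<noteq> 0"
    using assms by simp
  with assms show ?thesis
    unfolding ksq_eq eta1_def eta2_def by (simp add: field_simps)
qed

lemma ratio_degenerate:
  assumes "4 * \<omega> = c^2" and "x < 4 * c" and "0 < 3 * x + 4 * c"
  shows "(4 * c - x) / sqrt (Apoly \<omega> c x) = sqrt ((4 * c - x) / (3 * x + 4 * c))"
proof -
  let ?u = "4 * c - x" and ?p = "3 * x + 4 * c"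
  have "?u / sqrt (Apoly \<omega> c x) = (?u / sqrt ?u) / sqrt ?p"
    using assms by (simp add: Apoly_degenerate real_sqrt_mult mult.commute)
  also have "\<dots> = sqrt (?u / ?p)"
    using assms by (simp add: real_div_sqrt real_sqrt_divide)
  finally show ?thesis .
qed

lemma eta1_neg_degenerate:
  assumes "4 * \<omega> = c^2" and "0 < x" and "x < 4 * c"
  shows "eta1 \<omega> c x < 0"
proof -
  have "(4 * c - x) * (4 * c - x) < (3 * x + 4 * c) * (4 * c - x)"
    using assms by (intro mult_strict_right_mono) auto
  then have "4 * c - x < sqrt (Apoly \<omega> c x)"
    using assms by (simp add: Apoly_degenerate real_less_rsqrt power2_eq_square)
  then show ?thesis
    by (simp add: eta1_def)
qed

lemma eventually_degenerate_interval:
  "(c::real) > 0 \<Longrightarrow> eventually (\<lambda>x. 0 < x \<and> x < 4 * c) (at_left (4 * c))"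
  using eventually_at_left_real[of 0 "4 * c"] by simp

lemma tendsto_sqrt_Apoly_degenerate:
  assumes "4 * \<omega> = c^2"
  shows "((\<lambda>x. sqrt (Apoly \<omega> c x)) \<longlongrightarrow> 0) (at_left (4 * c))"
proof -
  have "((\<lambda>x. sqrt ((3 * x + 4 * c) * (4 * c - x)))
          \<longlongrightarrow> sqrt ((3 * (4 * c) + 4 * c) * (4 * c - 4 * c))) (at_left (4 * c))"
    by (intro tendsto_intros tendsto_ident_at)
  then show ?thesis
    by (simp add: Apoly_degenerate[OF assms])
qed

lemma tendsto_ksq_degenerate:
  assumes "4 * \<omega> = c^2" and "c > 0"
  shows "(ksq \<omega> c \<longlongrightarrow> 1/2) (at_left (4 * c))"
proof -
  let ?r = "\<lambda>x. sqrt ((4 * c - x) / (3 * x + 4 * c))"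
  let ?g = "\<lambda>x. (1 - ?r x) * (3 * x - 4 * c - sqrt (Apoly \<omega> c x)) / (4 * x)"
  have "(?g \<longlongrightarrow> (1 - sqrt ((4 * c - 4 * c) / (3 * (4 * c) + 4 * c)))
                    * (3 * (4 * c) - 4 * c - 0) / (4 * (4 * c))) (at_left (4 * c))"
    using assms
    by (intro tendsto_intros tendsto_sqrt_Apoly_degenerate tendsto_ident_at) auto
  then have "(?g \<longlongrightarrow> 1/2) (at_left (4 * c))"
    using assms by simp
  moreover have "eventually (\<lambda>x. ?g x = ksq \<omega> c x) (at_left (4 * c))"
    using eventually_degenerate_interval[OF assms(2)]
  proof eventually_elim
    case (elim x)
    then have "Apoly \<omega> c x \<noteq> 0"
      using assms by (simp add: Apoly_degenerate)
    with elim assms show ?case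
      by (simp add: ksq_eq_ratio ratio_degenerate)
  qed
  ultimately show ?thesis
    by (rule Lim_transform_eventually)
qed

lemma filterlim_betasq_degenerate:
  assumes "4 * \<omega> = c^2" and "c > 0"
  shows "filterlim (betasq \<omega> c) at_top (at_left (4 * c))"
proof -
  let ?F = "at_left (4 * c)"
  have "((\<lambda>x. - eta1 \<omega> c x) \<longlongrightarrow> - ((- (4 * c) + 4 * c - 0) / 2)) ?F"
    unfolding eta1_def
    by (intro tendsto_intros tendsto_ident_at tendsto_sqrt_Apoly_degenerate[OF assms(1)]) simp
  then have "((\<lambda>x. - eta1 \<omega> c x) \<longlongrightarrow> 0) ?F"
    by simp
  moreover have "eventually (\<lambda>x. 0 < - eta1 \<omega> c x) ?F"
    using eventually_degenerate_interval[OF assms(2)]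
    by eventually_elim (use assms eta1_neg_degenerate in auto)
  ultimately have inv: "filterlim (\<lambda>x. inverse (- eta1 \<omega> c x)) at_top ?F"
    by (rule filterlim_inverse_at_top)
  have "((\<lambda>x. x * ksq \<omega> c x) \<longlongrightarrow> 4 * c * (1/2)) ?F"
    by (intro tendsto_intros tendsto_ident_at tendsto_ksq_degenerate assms)
  then have "filterlim (\<lambda>x. x * ksq \<omega> c x * inverse (- eta1 \<omega> c x)) at_top ?F"
    by (rule filterlim_tendsto_pos_mult_at_top[OF _ _ inv]) (use assms(2) in simp)
  then show ?thesis
    by (simp add: betasq_def[abs_def] field_simps)
qed

theorem lemma3p6:
  fixes \<omega> c :: real
  assumes "\<omega> > c^2/4 \<or> (\<omega> = c^2/4 \<and> c > 0)"
  shows "(\<omega> > c^2/4 \<longrightarrow>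
            ((kmod \<omega> c \<longlongrightarrow> 1) (at (alpha1 \<omega> c) within {alpha0 \<omega> c<..<alpha1 \<omega> c}) \<and>
             (betasq \<omega> c \<longlongrightarrow> (2 * sqrt \<omega> + c) / (2 * sqrt \<omega> - c))
                (at (alpha1 \<omega> c) within {alpha0 \<omega> c<..<alpha1 \<omega> c})))
       \<and> ((\<omega> = c^2/4 \<and> c > 0) \<longrightarrow>
            ((kmod \<omega> c \<longlongrightarrow> 1 / sqrt 2) (at (alpha1 \<omega> c) within {alpha0 \<omega> c<..<alpha1 \<omega> c}) \<and>
             filterlim (betasq \<omega> c) at_top (at (alpha1 \<omega> c) within {alpha0 \<omega> c<..<alpha1 \<omega> c})))"
proof (intro conjI impI)
  assume c: "\<omega> > c^2/4"
  show "(kmod \<omega> c \<longlongrightarrow> 1) (at (alpha1 \<omega> c) within {alpha0 \<omega> c<..<alpha1 \<omega> c})"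
    using tendsto_kmod[OF tendsto_ksq_alpha1[OF c]] by simp
  show "(betasq \<omega> c \<longlongrightarrow> (2 * sqrt \<omega> + c) / (2 * sqrt \<omega> - c))
          (at (alpha1 \<omega> c) within {alpha0 \<omega> c<..<alpha1 \<omega> c})"
    using tendsto_betasq_alpha1[OF c] .
next
  assume "\<omega> = c^2/4 \<and> c > 0"
  then have \<omega>: "4 * \<omega> = c^2" and c: "c > 0"
    by auto
  note alpha1 = alpha1_degenerate[OF \<omega> less_imp_le[OF c]]
  have sub: "{alpha0 \<omega> c<..<alpha1 \<omega> c} \<subseteq> {..<4 * c}"
    by (auto simp: alpha1)
  show "(kmod \<omega> c \<longlongrightarrow> 1 / sqrt 2) (at (alpha1 \<omega> c) within {alpha0 \<omega> c<..<alpha1 \<omega> c})"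
    using filterlim_within_subset[OF tendsto_kmod[OF tendsto_ksq_degenerate[OF \<omega> c]] sub]
    by (simp add: alpha1 real_sqrt_divide)
  show "filterlim (betasq \<omega> c) at_top (at (alpha1 \<omega> c) within {alpha0 \<omega> c<..<alpha1 \<omega> c})"
    using filterlim_within_subset[OF filterlim_betasq_degenerate[OF \<omega> c] sub]
    by (simp add: alpha1)
qed

end
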